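(* Let $\hat\sigma_1,\hat\sigma_2,\hat\sigma_3$ be the Pauli matrices and, for arbitrary $\alpha_1,\alpha_2,\alpha_3\in\mathbb{R}$, let $$\Omega = e^{-i(\alpha_1\hat\sigma_1\otimes\hat\sigma_1+\alpha_2\hat\sigma_2\otimes\hat\sigma_2+\alpha_3\hat\sigma_3\otimes\hat\sigma_3)}.$$ Let $\rho^{SE}_D$ be any two-qubit density operator whose correlation matrix $t_{ij}=\operatorname{Tr}(\rho^{SE}_D\,\hat\sigma_i\otimes\hat\sigma_j)$ is diagonal, and let $\rho^S=\operatorname{Tr}_E\rho^{SE}_D$. Then there exists a single-qubit density operator $\zeta^E$ such that $$\operatorname{Tr}_E\big(\Omega\rho^{SE}_D\Omega^\dagger\big)=\operatorname{Tr}_E\big(\Omega(\rho^S\otimes\zeta^E)\Omega^\dagger\big),$$ i.e. the system dynamics are $U$-generated by a product state for $U=\Omega$.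
   Context: A two-qubit state is written $\rho^{SE}=\tfrac14\big(\mathbb{I}\otimes\mathbb{I}+\vec a\cdot\vec\sigma\otimes\mathbb{I}+\mathbb{I}\otimes\vec b\cdot\vec\sigma+\sum_{i,j}t_{ij}\hat\sigma_i\otimes\hat\sigma_j\big)$, where $(t_{ij})$ is its correlation matrix. "$U$-generated by a product state" means existence of a valid environment state $\zeta^E$ with $\operatorname{Tr}_E(U\rho^{SE}U^\dagger)=\operatorname{Tr}_E(U(\rho^S\otimes\zeta^E)U^\dagger)$. *)

theory Defs
  imports "HOL-Analysis.Analysis"
begin

text \<open>Qubit: index type 2 (basis states 0 and 1). Two-qubit system S (first factor) and
  environment E (second factor): index type 2 \<times> 2.\<close>

type_synonym qmat = "complex^2^2"
type_synonym qqmat = "complex^(2 \<times> 2)^(2 \<times> 2)"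

definition pauli :: "nat \<Rightarrow> qmat" where
  "pauli k = (\<chi> i j.
     if k = 1 then (if i \<noteq> j then 1 else 0)
     else if k = 2 then (if i = j then 0 else if i = 0 then - \<i> else \<i>)
     else if k = 3 then (if i \<noteq> j then 0 else if i = 0 then 1 else -1)
     else 0)"

definition kron :: "complex^'n::finite^'m::finite \<Rightarrow> complex^'q::finite^'p::finite \<Rightarrow> complex^('n \<times> 'q)^('m \<times> 'p)" where
  "kron A B = (\<chi> r c. A$(fst r)$(fst c) * B$(snd r)$(snd c))"

definition ptrace_E :: "complex^('n::finite \<times> 'q::finite)^('n \<times> 'q) \<Rightarrow> complex^'n^'n" where
  "ptrace_E R = (\<chi> i j. \<Sum>k\<in>UNIV. R$(i,k)$(j,k))"

definition adjoint_mat :: "complex^'n^'m \<Rightarrow> complex^'m^'n" where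
  "adjoint_mat A = (\<chi> i j. cnj (A$j$i))"

definition cscale :: "complex \<Rightarrow> complex^'n^'m \<Rightarrow> complex^'n^'m" where
  "cscale c A = (\<chi> i j. c * A$i$j)"

primrec mpow :: "complex^'n^'n \<Rightarrow> nat \<Rightarrow> complex^'n^'n" where
  "mpow A 0 = mat 1"
| "mpow A (Suc n) = A ** mpow A n"

definition mexp :: "complex^'n^'n \<Rightarrow> complex^'n^'n" where
  "mexp A = (\<chi> i j. \<Sum>n. (mpow A n)$i$j / of_nat (fact n))"

definition psd :: "complex^'n^'n \<Rightarrow> bool" where
  "psd A \<longleftrightarrow> (\<forall>v::complex^'n. let q = (\<Sum>i\<in>UNIV. \<Sum>j\<in>UNIV. cnj (v$i) * A$i$j * v$j)
                                in Im q = 0 \<and> Re q \<ge> 0)"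

definition density :: "complex^'n^'n \<Rightarrow> bool" where
  "density A \<longleftrightarrow> psd A \<and> trace A = 1"

definition corr :: "qqmat \<Rightarrow> nat \<Rightarrow> nat \<Rightarrow> complex" where
  "corr \<rho> i j = trace (\<rho> ** kron (pauli i) (pauli j))"

definition Omega :: "real \<Rightarrow> real \<Rightarrow> real \<Rightarrow> qqmat" where
  "Omega a1 a2 a3 = mexp (cscale (- \<i>)
      (cscale (complex_of_real a1) (kron (pauli 1) (pauli 1))
     + cscale (complex_of_real a2) (kron (pauli 2) (pauli 2))
     + cscale (complex_of_real a3) (kron (pauli 3) (pauli 3))))"

end

theory Submission
  imports Defs
begin

text \<open>
  The Hamiltonian commutes with the parity \<sigma>3 \<otimes> \<sigma>3, so \<Omega> acts separately on span{|00>, |11>}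
  and span{|01>, |10>}, on each as a phase times a rotation generated by \<sigma>1. Write c_k = cos 2\<alpha>_k,
  s_k = sin 2\<alpha>_k and let (i, j, k) be a cyclic permutation of (1, 2, 3). A direct computation
  shows that the Bloch vector of Tr_E(\<Omega> \<rho> \<Omega>\<dagger>) is
    r_i = c_j c_k a_i + s_j s_k b_i + s_j c_k t_kj - c_j s_k t_jk.
  For a diagonal correlation matrix the t-terms vanish, while for \<rho>^S \<otimes> \<zeta> with Bloch vector z
  they equal a_k z_j. If all s_k \<noteq> 0, matching the two amounts to z - v \<times> z = b with
  v_k = c_k a_k / s_k. Since v \<times> z is orthogonal to z, the linear map z \<mapsto> z - v \<times> z does not
  decrease norms, hence is invertible, and the solution satisfies |z| \<le> |b| \<le> 1, so \<zeta> is a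
  state. If some s_i = 0, the vector z = b_i e_i already works.
\<close>

lemma two_eq_0_or_1: "(i :: 2) = 0 \<or> i = 1"
  by (metis exhaust_2 zero_neq_one)

lemma cases_2:
  fixes i :: 2
  obtains "i = 0" | "i = 1"
  using two_eq_0_or_1 by blast

lemma cases_2x2:
  fixes r :: "2 \<times> 2"
  obtains "r = (0, 0)" | "r = (0, 1)" | "r = (1, 0)" | "r = (1, 1)"
proof -
  obtain i j where "r = (i, j)" by fastforce
  then show ?thesis using that by (cases i rule: cases_2; cases j rule: cases_2) simp_all
qed

lemma all_2_iff: "(\<forall>i :: 2. P i) \<longleftrightarrow> P 0 \<and> P 1"
  by (metis two_eq_0_or_1)

lemma mat_eqI: "(\<And>r c. A $ r $ c = B $ r $ c) \<Longrightarrow> A = B"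
  by (simp add: vec_eq_iff)

lemma sum_UNIV_2: "sum f (UNIV :: 2 set) = f 0 + f 1"
proof -
  have UNIV_eq: "(UNIV :: 2 set) = {0, 1}" using two_eq_0_or_1 by auto
  show ?thesis by (simp add: UNIV_eq)
qed

lemma sum_UNIV_2x2: "sum f (UNIV :: (2 \<times> 2) set) = f (0, 0) + f (0, 1) + f (1, 0) + f (1, 1)"
proof -
  have UNIV_eq: "(UNIV :: (2 \<times> 2) set) = {(0, 0), (0, 1), (1, 0), (1, 1)}"
    using two_eq_0_or_1 by auto
  show ?thesis by (simp add: UNIV_eq add.assoc)
qed

lemma matrix_mult_cscale_left: "cscale k A ** B = cscale k (A ** B)"
  by (simp add: vec_eq_iff matrix_matrix_mult_def cscale_def sum_distrib_left mult.assoc)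

lemma matrix_mult_cscale_right: "A ** cscale k B = cscale k (A ** B)"
  by (simp add: vec_eq_iff matrix_matrix_mult_def cscale_def sum_distrib_left mult.left_commute)

lemma ptrace_E_cscale: "ptrace_E (cscale k R) = cscale k (ptrace_E R)"
  by (simp add: vec_eq_iff ptrace_E_def cscale_def sum_distrib_left)

lemma cscale_cscale: "cscale k (cscale l A) = cscale (k * l) A"
  by (simp add: vec_eq_iff cscale_def mult.assoc)

text \<open>The matrix acting as [[f, g], [g, f]] on span{|00>, |11>} and as [[f', g'], [g', f']]
  on span{|01>, |10>}.\<close>
definition parity_block :: "complex \<Rightarrow> complex \<Rightarrow> complex \<Rightarrow> complex \<Rightarrow> qqmat" where
  "parity_block f g f' g' = (\<chi> r c.
     if (fst r = snd r) \<noteq> (fst c = snd c) then 0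
     else if fst r = snd r then (if r = c then f else g)
     else (if r = c then f' else g'))"

lemma parity_block_mult:
  "parity_block f g f' g' ** parity_block h k h' k' =
     parity_block (f * h + g * k) (f * k + g * h) (f' * h' + g' * k') (f' * k' + g' * h')"
  (is "?L = ?R")
proof (rule mat_eqI)
  show "?L $ r $ c = ?R $ r $ c" for r c
    by (cases r rule: cases_2x2; cases c rule: cases_2x2;
        simp add: matrix_matrix_mult_def parity_block_def sum_UNIV_2x2 algebra_simps)
qed

lemma parity_block_one: "parity_block 1 0 1 0 = mat 1"
  by (simp add: vec_eq_iff parity_block_def mat_def)

lemma adjoint_mat_parity_block:
  "adjoint_mat (parity_block f g f' g') = parity_block (cnj f) (cnj g) (cnj f') (cnj g')"
  by (simp add: vec_eq_iff adjoint_mat_def parity_block_def)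

lemma mpow_parity_block:
  "mpow (parity_block p q p' q') n =
     parity_block (((p + q) ^ n + (p - q) ^ n) / 2) (((p + q) ^ n - (p - q) ^ n) / 2)
                  (((p' + q') ^ n + (p' - q') ^ n) / 2) (((p' + q') ^ n - (p' - q') ^ n) / 2)"
proof (induction n)
  case 0
  then show ?case by (simp add: parity_block_one)
next
  case (Suc n)
  then show ?case
    by (simp add: parity_block_mult algebra_simps add_divide_distrib diff_divide_distrib)
qed

lemma sums_exp_complex: "(\<lambda>n. z ^ n / fact n) sums exp (z :: complex)"
  using exp_converges[of z] by (simp add: scaleR_conv_of_real divide_inverse mult.commute)

lemma sums_cosh_sinh_shift:
  fixes p q :: complex
  shows "(\<lambda>n. ((p + q) ^ n + (p - q) ^ n) / (2 * fact n)) sums (exp p * cosh q)"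
    and "(\<lambda>n. ((p + q) ^ n - (p - q) ^ n) / (2 * fact n)) sums (exp p * sinh q)"
proof -
  have "exp (p + q) = exp p * exp q" "exp (p - q) = exp p * exp (- q)"
    by (simp_all add: exp_add[symmetric])
  then have cosh: "(exp (p + q) + exp (p - q)) / 2 = exp p * cosh q"
    and sinh: "(exp (p + q) - exp (p - q)) / 2 = exp p * sinh q"
    by (simp_all add: cosh_def sinh_def scaleR_conv_of_real field_simps)
  have "(\<lambda>n. ((p + q) ^ n / fact n + (p - q) ^ n / fact n) / 2) sums ((exp (p + q) + exp (p - q)) / 2)"
    by (intro sums_divide sums_add sums_exp_complex)
  then show "(\<lambda>n. ((p + q) ^ n + (p - q) ^ n) / (2 * fact n)) sums (exp p * cosh q)"
    unfolding cosh by (simp add: add_divide_distrib mult.commute)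
  have "(\<lambda>n. ((p + q) ^ n / fact n - (p - q) ^ n / fact n) / 2) sums ((exp (p + q) - exp (p - q)) / 2)"
    by (intro sums_divide sums_diff sums_exp_complex)
  then show "(\<lambda>n. ((p + q) ^ n - (p - q) ^ n) / (2 * fact n)) sums (exp p * sinh q)"
    unfolding sinh by (simp add: diff_divide_distrib mult.commute)
qed

lemma mexp_parity_block:
  "mexp (parity_block p q p' q') =
     parity_block (exp p * cosh q) (exp p * sinh q) (exp p' * cosh q') (exp p' * sinh q')"
  (is "mexp ?M = ?R")
proof (rule mat_eqI)
  fix r c
  have "(\<lambda>n. mpow ?M n $ r $ c / fact n) sums (?R $ r $ c)"
    unfolding mpow_parity_block
    by (cases r rule: cases_2x2; cases c rule: cases_2x2;
        simp add: parity_block_def sums_cosh_sinh_shift)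
  then show "mexp ?M $ r $ c = ?R $ r $ c"
    by (simp add: mexp_def sums_iff)
qed

lemma Omega_eq_parity_block:
  "Omega a1 a2 a3 = parity_block (cis (- a3) * cos (a1 - a2)) (- \<i> * cis (- a3) * sin (a1 - a2))
                                  (cis a3 * cos (a1 + a2)) (- \<i> * cis a3 * sin (a1 + a2))"
proof -
  have generator: "cscale (- \<i>) (cscale (complex_of_real a1) (kron (pauli 1) (pauli 1))
      + cscale (complex_of_real a2) (kron (pauli 2) (pauli 2))
      + cscale (complex_of_real a3) (kron (pauli 3) (pauli 3)))
    = parity_block (- \<i> * a3) (- \<i> * (a1 - a2)) (\<i> * a3) (- \<i> * (a1 + a2))"
    (is "?H = ?P")
  proof (rule mat_eqI)
    show "?H $ r $ c = ?P $ r $ c" for r c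
      by (cases r rule: cases_2x2; cases c rule: cases_2x2;
          simp add: parity_block_def cscale_def kron_def pauli_def algebra_simps)
  qed
  show ?thesis
    unfolding Omega_def generator mexp_parity_block
    by (simp add: cis_conv_exp cosh_conv_cos sinh_conv_sin ac_simps
        flip: cos_of_real sin_of_real of_real_diff of_real_add)
qed

definition parity_flip :: "2 \<times> 2 \<Rightarrow> 2 \<times> 2" where
  "parity_flip r = (1 - fst r, 1 - snd r)"

lemma parity_block_mult_left:
  "(parity_block f g f' g' ** X) $ r $ c =
     (if fst r = snd r then f else f') * X $ r $ c + (if fst r = snd r then g else g') * X $ parity_flip r $ c"
  by (cases r rule: cases_2x2; simp add: matrix_matrix_mult_def sum_UNIV_2x2 parity_block_def parity_flip_def)

lemma parity_block_mult_right:
  "(X ** parity_block f g f' g') $ r $ c =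
     X $ r $ c * (if fst c = snd c then f else f') + X $ r $ parity_flip c * (if fst c = snd c then g else g')"
  by (cases c rule: cases_2x2; simp add: matrix_matrix_mult_def sum_UNIV_2x2 parity_block_def parity_flip_def)

definition pauli_expansion :: "(nat \<Rightarrow> real) \<Rightarrow> qmat" where
  "pauli_expansion p = (\<chi> i j. (if i = j then 1 else 0) + (\<Sum>k\<in>{1,2,3}. p k * pauli k $ i $ j))"

definition pauli_expansion2 :: "(nat \<Rightarrow> real) \<Rightarrow> (nat \<Rightarrow> real) \<Rightarrow> (nat \<Rightarrow> nat \<Rightarrow> real) \<Rightarrow> qqmat" where
  "pauli_expansion2 a b T = (\<chi> r c. (if r = c then 1 else 0)
     + (\<Sum>i\<in>{1,2,3}. a i * pauli i $ fst r $ fst c * (if snd r = snd c then 1 else 0))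
     + (\<Sum>j\<in>{1,2,3}. b j * (if fst r = fst c then 1 else 0) * pauli j $ snd r $ snd c)
     + (\<Sum>i\<in>{1,2,3}. \<Sum>j\<in>{1,2,3}. T i j * pauli i $ fst r $ fst c * pauli j $ snd r $ snd c))"

definition qubit_bloch :: "(nat \<Rightarrow> real) \<Rightarrow> qmat" where
  "qubit_bloch p = cscale (1 / 2) (pauli_expansion p)"

definition two_qubit_bloch :: "(nat \<Rightarrow> real) \<Rightarrow> (nat \<Rightarrow> real) \<Rightarrow> (nat \<Rightarrow> nat \<Rightarrow> real) \<Rightarrow> qqmat" where
  "two_qubit_bloch a b T = cscale (1 / 4) (pauli_expansion2 a b T)"

definition bloch_evolution ::
    "real \<Rightarrow> real \<Rightarrow> real \<Rightarrow> real \<Rightarrow> real \<Rightarrow> real \<Rightarrow>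
     (nat \<Rightarrow> real) \<Rightarrow> (nat \<Rightarrow> real) \<Rightarrow> (nat \<Rightarrow> nat \<Rightarrow> real) \<Rightarrow> nat \<Rightarrow> real" where
  "bloch_evolution c1 c2 c3 s1 s2 s3 a b T k =
    (if k = 1 then c2 * c3 * a 1 + s2 * c3 * T 3 2 - c2 * s3 * T 2 3 + s2 * s3 * b 1
     else if k = 2 then c3 * c1 * a 2 + s3 * c1 * T 1 3 - c3 * s1 * T 3 1 + s3 * s1 * b 2
     else c1 * c2 * a 3 + s1 * c2 * T 2 1 - c1 * s2 * T 1 2 + s1 * s2 * b 3)"

text \<open>Here x, y, u, v, c, s stand for cos(\<alpha>1 - \<alpha>2), sin(\<alpha>1 - \<alpha>2), cos(\<alpha>1 + \<alpha>2),
  sin(\<alpha>1 + \<alpha>2), cos \<alpha>3, sin \<alpha>3; only the circle relations are needed.\<close>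
lemma ptrace_conj_parity_block:
  fixes x y u v c s :: real
  assumes "x\<^sup>2 + y\<^sup>2 = 1" "u\<^sup>2 + v\<^sup>2 = 1" "c\<^sup>2 + s\<^sup>2 = 1"
  defines "W \<equiv> parity_block (Complex c (- s) * x) (- \<i> * Complex c (- s) * y)
                             (Complex c s * u) (- \<i> * Complex c s * v)"
  shows "ptrace_E (W ** pauli_expansion2 a b T ** adjoint_mat W) = cscale 2 (pauli_expansion
     (bloch_evolution (u * x - v * y) (u * x + v * y) (c\<^sup>2 - s\<^sup>2) (v * x + u * y) (v * x - u * y) (2 * s * c) a b T))"
  unfolding vec_eq_iff all_2_iff using assms(1-3)
  by (simp add: W_def adjoint_mat_parity_block ptrace_E_def sum_UNIV_2 parity_block_mult_left
        parity_block_mult_right parity_flip_def pauli_expansion2_def pauli_expansion_def cscale_def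
        bloch_evolution_def pauli_def complex_eq_iff;
      (intro conjI)?; (simp add: algebra_simps power2_eq_square; fail)?; algebra)

lemma ptrace_Omega_conj_two_qubit_bloch:
  "ptrace_E (Omega a1 a2 a3 ** two_qubit_bloch a b T ** adjoint_mat (Omega a1 a2 a3)) =
     qubit_bloch (bloch_evolution (cos (2 * a1)) (cos (2 * a2)) (cos (2 * a3))
                                  (sin (2 * a1)) (sin (2 * a2)) (sin (2 * a3)) a b T)"
proof -
  have "cis a3 = Complex (cos a3) (sin a3)" "cis (- a3) = Complex (cos a3) (- sin a3)"
    by (simp_all add: complex_eq_iff)
  then have Omega: "Omega a1 a2 a3 =
      parity_block (Complex (cos a3) (- sin a3) * cos (a1 - a2))
                   (- \<i> * Complex (cos a3) (- sin a3) * sin (a1 - a2))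
                   (Complex (cos a3) (sin a3) * cos (a1 + a2))
                   (- \<i> * Complex (cos a3) (sin a3) * sin (a1 + a2))"
    by (simp add: Omega_eq_parity_block)
  have double_angle:
    "cos (a1 + a2) * cos (a1 - a2) - sin (a1 + a2) * sin (a1 - a2) = cos (2 * a1)"
    "cos (a1 + a2) * cos (a1 - a2) + sin (a1 + a2) * sin (a1 - a2) = cos (2 * a2)"
    "(cos a3)\<^sup>2 - (sin a3)\<^sup>2 = cos (2 * a3)"
    "sin (a1 + a2) * cos (a1 - a2) + cos (a1 + a2) * sin (a1 - a2) = sin (2 * a1)"
    "sin (a1 + a2) * cos (a1 - a2) - cos (a1 + a2) * sin (a1 - a2) = sin (2 * a2)"
    "2 * sin a3 * cos a3 = sin (2 * a3)"
    by (simp_all add: cos_double sin_double flip: cos_add cos_diff sin_add sin_diff)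
  have "ptrace_E (Omega a1 a2 a3 ** pauli_expansion2 a b T ** adjoint_mat (Omega a1 a2 a3)) =
      cscale 2 (pauli_expansion (bloch_evolution (cos (2 * a1)) (cos (2 * a2)) (cos (2 * a3))
                                  (sin (2 * a1)) (sin (2 * a2)) (sin (2 * a3)) a b T))"
    using ptrace_conj_parity_block[of "cos (a1 - a2)" "sin (a1 - a2)" "cos (a1 + a2)" "sin (a1 + a2)"
        "cos a3" "sin a3" a b T]
    unfolding Omega double_angle by (simp only: sin_cos_squared_add2 simp_thms)
  then show ?thesis
    by (simp add: two_qubit_bloch_def qubit_bloch_def matrix_mult_cscale_left matrix_mult_cscale_right
        ptrace_E_cscale cscale_cscale)
qed

lemma quadratic_form_two_point:
  fixes A :: "complex^'n::finite^'n" and p q :: 'n and w :: complex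
  defines "v \<equiv> \<chi> k. of_bool (k = p) + w * of_bool (k = q)"
  shows "(\<Sum>i\<in>UNIV. \<Sum>j\<in>UNIV. cnj (v$i) * A$i$j * v$j) =
           A$p$p + w * A$p$q + cnj w * A$q$p + cnj w * w * A$q$q"
proof -
  have cnj_of_bool: "cnj (of_bool P) = of_bool P" for P
    by (cases P) simp_all
  have inner: "(\<Sum>j\<in>UNIV. A$i$j * v$j) = A$i$p + w * A$i$q" for i
    by (simp add: v_def distrib_left sum.distrib mult.assoc[symmetric])
  have "(\<Sum>i\<in>UNIV. \<Sum>j\<in>UNIV. cnj (v$i) * A$i$j * v$j) = (\<Sum>i\<in>UNIV. cnj (v$i) * (A$i$p + w * A$i$q))"
    by (simp only: mult.assoc sum_distrib_left[symmetric] inner)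
  also have "\<dots> = A$p$p + w * A$p$q + cnj w * (A$q$p + w * A$q$q)"
    by (simp add: v_def cnj_of_bool distrib_right sum.distrib mult.assoc sum_distrib_left[symmetric])
  finally show ?thesis
    by (simp add: algebra_simps)
qed

lemma psd_quadratic_form:
  assumes "psd A"
  shows "Im (\<Sum>i\<in>UNIV. \<Sum>j\<in>UNIV. cnj (v$i) * A$i$j * v$j) = 0"
    and "Re (\<Sum>i\<in>UNIV. \<Sum>j\<in>UNIV. cnj (v$i) * A$i$j * v$j) \<ge> 0"
  using assms unfolding psd_def Let_def by blast+

lemma psd_hermitian:
  fixes A :: "complex^'n::finite^'n"
  assumes "psd A"
  shows "A$q$p = cnj (A$p$q)"
proof -
  have Im_zero: "Im (A$p$p + w * A$p$q + cnj w * A$q$p + cnj w * w * A$q$q) = 0" for p q w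
    using psd_quadratic_form(1)[OF assms, of "\<chi> k. of_bool (k = p) + w * of_bool (k = q)"]
    unfolding quadratic_form_two_point .
  show ?thesis
    using Im_zero[of p 0 q] Im_zero[of q 0 p] Im_zero[of p 1 q] Im_zero[of p \<i> q]
    by (simp add: complex_eq_iff)
qed

lemma hermitian_eq_two_qubit_bloch:
  fixes \<rho> :: qqmat
  assumes hermitian: "\<And>p q. \<rho>$q$p = cnj (\<rho>$p$q)" and trace: "trace \<rho> = 1"
  shows "\<rho> = two_qubit_bloch (\<lambda>i. Re (trace (\<rho> ** kron (pauli i) (mat 1))))
                             (\<lambda>j. Re (trace (\<rho> ** kron (mat 1) (pauli j))))
                             (\<lambda>i j. Re (corr \<rho> i j))"
  (is "_ = ?B")
proof (rule mat_eqI)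
  have real_diag: "Im (\<rho>$r$r) = 0" for r
    using hermitian[of r r] by (simp add: complex_eq_iff)
  have lower: "\<rho>$(0,1)$(0,0) = cnj (\<rho>$(0,0)$(0,1))" "\<rho>$(1,0)$(0,0) = cnj (\<rho>$(0,0)$(1,0))"
    "\<rho>$(1,1)$(0,0) = cnj (\<rho>$(0,0)$(1,1))" "\<rho>$(1,0)$(0,1) = cnj (\<rho>$(0,1)$(1,0))"
    "\<rho>$(1,1)$(0,1) = cnj (\<rho>$(0,1)$(1,1))" "\<rho>$(1,1)$(1,0) = cnj (\<rho>$(1,0)$(1,1))"
    by (rule hermitian)+
  have "Re (trace \<rho>) = 1" using trace by simp
  then have trace_sum: "Re (\<rho>$(0,0)$(0,0)) + Re (\<rho>$(0,1)$(0,1)) + Re (\<rho>$(1,0)$(1,0)) + Re (\<rho>$(1,1)$(1,1)) = 1"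
    by (simp add: trace_def sum_UNIV_2x2)
  show "\<rho> $ r $ c = ?B $ r $ c" for r c
    using trace_sum real_diag[of "(0,0)"] real_diag[of "(0,1)"] real_diag[of "(1,0)"] real_diag[of "(1,1)"]
    by (cases r rule: cases_2x2; cases c rule: cases_2x2;
        simp add: two_qubit_bloch_def pauli_expansion2_def cscale_def corr_def trace_def
          matrix_matrix_mult_def kron_def mat_def pauli_def sum_UNIV_2x2 sum_UNIV_2 lower complex_eq_iff;
        linarith?)
qed

lemma psd_two_qubit_bloch_norm_le:
  assumes "psd (two_qubit_bloch a b T)"
  shows "(\<Sum>k\<in>{1,2,3}. (b k)\<^sup>2) \<le> 1"
proof -
  let ?\<rho> = "two_qubit_bloch a b T"
  let ?Q = "\<lambda>v. Re (\<Sum>r\<in>UNIV. \<Sum>s\<in>UNIV. cnj (v$r) * ?\<rho>$r$s * v$s)"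
  \<comment> \<open>Summing the form over |k> \<otimes> w evaluates the marginal [[A, B], [cnj B, D]] of E at w;
    w = (-B, A) and w = (D, -cnj B) give A and D times its determinant A D - |B|^2.\<close>
  define A where "A = (1 + b 3) / 2"
  define D where "D = (1 - b 3) / 2"
  define B where "B = Complex (b 1 / 2) (- b 2 / 2)"
  define v where "v k = (\<chi> r::2\<times>2. if fst r = k then (if snd r = 0 then - B else complex_of_real A) else 0)" for k
  define v' where "v' k = (\<chi> r::2\<times>2. if fst r = k then (if snd r = 0 then complex_of_real D else - cnj B) else 0)" for k
  have nonneg: "?Q w \<ge> 0" for w
    using psd_quadratic_form(2)[OF assms] .
  have "?Q (v 0) + ?Q (v 1) = A * (A * D - ((b 1)\<^sup>2 + (b 2)\<^sup>2) / 4)"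
    by (simp add: sum_UNIV_2x2 two_qubit_bloch_def pauli_expansion2_def cscale_def pauli_def
        v_def A_def D_def B_def power2_eq_square field_simps)
  moreover have "?Q (v' 0) + ?Q (v' 1) = D * (A * D - ((b 1)\<^sup>2 + (b 2)\<^sup>2) / 4)"
    by (simp add: sum_UNIV_2x2 two_qubit_bloch_def pauli_expansion2_def cscale_def pauli_def
        v'_def A_def D_def B_def power2_eq_square field_simps)
  moreover have "A > 0 \<or> D > 0"
    by (auto simp: A_def D_def)
  ultimately have "A * D - ((b 1)\<^sup>2 + (b 2)\<^sup>2) / 4 \<ge> 0"
    using nonneg[of "v 0"] nonneg[of "v 1"] nonneg[of "v' 0"] nonneg[of "v' 1"]
    by (smt (verit) mult_pos_neg)
  then show ?thesis
    by (simp add: A_def D_def field_simps power2_eq_square)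
qed

lemma density_qubit_bloch:
  assumes "(\<Sum>k\<in>{1,2,3}. (p k)\<^sup>2) \<le> 1"
  shows "density (qubit_bloch p)"
proof -
  have "trace (qubit_bloch p) = 1"
    by (simp add: trace_def sum_UNIV_2 qubit_bloch_def pauli_expansion_def cscale_def pauli_def field_simps)
  moreover have "psd (qubit_bloch p)"
    unfolding psd_def Let_def
  proof
    fix v :: "complex^2"
    obtain \<alpha> \<beta> \<gamma> \<delta> where v: "v$0 = Complex \<alpha> \<beta>" "v$1 = Complex \<gamma> \<delta>"
      by (meson complex.exhaust_sel)
    let ?Q = "\<Sum>i\<in>UNIV. \<Sum>j\<in>UNIV. cnj (v$i) * qubit_bloch p $ i $ j * v$j"
    define N where "N = \<alpha>\<^sup>2 + \<beta>\<^sup>2 + \<gamma>\<^sup>2 + \<delta>\<^sup>2"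
    \<comment> \<open>The expectations of the Pauli matrices in v form a vector of length N = |v|^2.\<close>
    define W where "W k = (if k = 1 then 2 * (\<alpha> * \<gamma> + \<beta> * \<delta>) else if k = 2 then 2 * (\<alpha> * \<delta> - \<beta> * \<gamma>)
                           else \<alpha>\<^sup>2 + \<beta>\<^sup>2 - \<gamma>\<^sup>2 - \<delta>\<^sup>2)" for k :: nat
    have "Im ?Q = 0"
      by (simp add: sum_UNIV_2 qubit_bloch_def pauli_expansion_def cscale_def pauli_def v field_simps)
    moreover have "Re ?Q = (N + (\<Sum>k\<in>{1,2,3}. p k * W k)) / 2"
      by (simp add: sum_UNIV_2 qubit_bloch_def pauli_expansion_def cscale_def pauli_def v N_def W_def
          field_simps power2_eq_square)
    moreover have "(\<Sum>k\<in>{1,2,3}. p k * W k) \<ge> - N"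
    proof -
      have W_sq: "(\<Sum>k\<in>{1,2,3}. (W k)\<^sup>2) = N\<^sup>2"
        by (simp add: W_def N_def power2_eq_square algebra_simps)
      have "(\<Sum>k\<in>{1,2,3}. p k * W k)\<^sup>2 \<le> (\<Sum>k\<in>{1,2,3}. (p k)\<^sup>2) * (\<Sum>k\<in>{1,2,3}. (W k)\<^sup>2)"
        by (rule Cauchy_Schwarz_ineq_sum)
      also have "\<dots> \<le> N\<^sup>2"
        unfolding W_sq using assms by (intro mult_left_le_one_le) (simp_all add: sum_nonneg)
      finally have "\<bar>\<Sum>k\<in>{1,2,3}. p k * W k\<bar> \<le> \<bar>N\<bar>"
        by (simp add: abs_le_square_iff)
      moreover have "N \<ge> 0" by (simp add: N_def)
      ultimately show ?thesis by linarith
    qed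
    ultimately show "Im ?Q = 0 \<and> Re ?Q \<ge> 0" by simp
  qed
  ultimately show ?thesis by (simp add: density_def)
qed

lemma ptrace_two_qubit_bloch: "ptrace_E (two_qubit_bloch a b T) = qubit_bloch a"
  (is "?L = ?R")
proof (rule mat_eqI)
  show "?L $ i $ j = ?R $ i $ j" for i j
    by (cases i rule: cases_2; cases j rule: cases_2;
        simp add: ptrace_E_def sum_UNIV_2 two_qubit_bloch_def qubit_bloch_def pauli_expansion2_def
          pauli_expansion_def cscale_def pauli_def complex_eq_iff; simp add: field_simps)
qed

lemma kron_qubit_bloch: "kron (qubit_bloch a) (qubit_bloch z) = two_qubit_bloch a z (\<lambda>i j. a i * z j)"
  (is "?L = ?R")
proof (rule mat_eqI)
  show "?L $ r $ c = ?R $ r $ c" for r c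
    by (cases r rule: cases_2x2; cases c rule: cases_2x2;
        simp add: kron_def two_qubit_bloch_def qubit_bloch_def pauli_expansion2_def
          pauli_expansion_def cscale_def pauli_def complex_eq_iff algebra_simps; simp add: field_simps)
qed

lemma norm_diff_cross_sq:
  fixes v z :: "real^3"
  shows "(norm (z - cross3 v z))\<^sup>2 = (norm z)\<^sup>2 + (norm (cross3 v z))\<^sup>2"
  by (simp add: power2_norm_eq_inner inner_diff_left inner_diff_right dot_cross_self inner_commute)

lemma exists_diff_cross_eq:
  fixes v b :: "real^3"
  shows "\<exists>z. z - cross3 v z = b \<and> norm z \<le> norm b"
proof -
  let ?f = "\<lambda>z. z - cross3 v z"
  have lin: "linear ?f"
    using bilinear_cross by (intro linear_compose_sub linear_ident) (simp add: bilinear_def)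
  have "inj ?f"
    unfolding linear_injective_0[OF lin]
  proof (intro allI impI)
    fix z assume "?f z = 0"
    then have "(norm z)\<^sup>2 + (norm (cross3 v z))\<^sup>2 = 0"
      using norm_diff_cross_sq[of z v] by simp
    then show "z = 0" by (simp add: add_nonneg_eq_0_iff)
  qed
  then obtain z where z: "?f z = b"
    using lin linear_injective_imp_surjective by (metis surjE)
  have "(norm z)\<^sup>2 \<le> (norm b)\<^sup>2"
    using norm_diff_cross_sq[of z v] z by simp
  then have "norm z \<le> norm b"
    by (rule power2_le_imp_le) simp
  with z show ?thesis by blast
qed

lemma exists_product_bloch_evolution:
  assumes "\<forall>i\<in>{1,2,3::nat}. \<forall>j\<in>{1,2,3::nat}. i \<noteq> j \<longrightarrow> T i j = 0"
  shows "\<exists>z. (\<Sum>k\<in>{1,2,3}. (z k)\<^sup>2) \<le> (\<Sum>k\<in>{1,2,3}. (b k)\<^sup>2) \<and>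
    bloch_evolution c1 c2 c3 s1 s2 s3 a b T = bloch_evolution c1 c2 c3 s1 s2 s3 a z (\<lambda>i j. a i * z j)"
proof (cases "s1 = 0 \<or> s2 = 0 \<or> s3 = 0")
  case True
  then show ?thesis
  proof (elim disjE)
    assume "s1 = 0"
    then show ?thesis
      using assms by (intro exI[of _ "\<lambda>k. if k = 1 then b 1 else 0"]) (auto simp: bloch_evolution_def fun_eq_iff)
  next
    assume "s2 = 0"
    then show ?thesis
      using assms by (intro exI[of _ "\<lambda>k. if k = 2 then b 2 else 0"]) (auto simp: bloch_evolution_def fun_eq_iff)
  next
    assume "s3 = 0"
    then show ?thesis
      using assms by (intro exI[of _ "\<lambda>k. if k = 3 then b 3 else 0"]) (auto simp: bloch_evolution_def fun_eq_iff)
  qed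
next
  case False
  define v :: "real^3" where "v = vector [c1 * a 1 / s1, c2 * a 2 / s2, c3 * a 3 / s3]"
  define b' :: "real^3" where "b' = vector [b 1, b 2, b 3]"
  obtain w where w: "w - cross3 v w = b'" and w_norm: "norm w \<le> norm b'"
    using exists_diff_cross_eq by blast
  define z where "z k = w $ of_nat k" for k
  have norm_sq: "(norm y)\<^sup>2 = (y $ 1)\<^sup>2 + (y $ 2)\<^sup>2 + (y $ 3)\<^sup>2" for y :: "real^3"
    unfolding power2_norm_eq_inner by (simp add: inner_vec_def sum_3 power2_eq_square)
  have "(\<Sum>k\<in>{1,2,3}. (z k)\<^sup>2) \<le> (\<Sum>k\<in>{1,2,3}. (b k)\<^sup>2)"
    using power_mono[OF w_norm, of 2] by (simp add: z_def norm_sq b'_def)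
  moreover have "z 1 - (v$2 * z 3 - z 2 * v$3) = b 1" "z 2 - (v$3 * z 1 - z 3 * v$1) = b 2"
    "z 3 - (v$1 * z 2 - z 1 * v$2) = b 3"
    using w unfolding z_def b'_def vec_eq_iff forall_3 by (simp_all add: cross_components)
  then have "bloch_evolution c1 c2 c3 s1 s2 s3 a b T = bloch_evolution c1 c2 c3 s1 s2 s3 a z (\<lambda>i j. a i * z j)"
    using False assms by (auto simp: fun_eq_iff bloch_evolution_def v_def field_simps)
  ultimately show ?thesis by blast
qed

theorem theorem2:
  fixes a1 a2 a3 :: real and \<rho> :: qqmat
  assumes "density \<rho>"
    and "\<forall>i\<in>{1,2,3::nat}. \<forall>j\<in>{1,2,3::nat}. i \<noteq> j \<longrightarrow> corr \<rho> i j = 0"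
  shows "\<exists>\<zeta>::qmat. density \<zeta> \<and>
    ptrace_E (Omega a1 a2 a3 ** \<rho> ** adjoint_mat (Omega a1 a2 a3))
    = ptrace_E (Omega a1 a2 a3 ** kron (ptrace_E \<rho>) \<zeta> ** adjoint_mat (Omega a1 a2 a3))"
proof -
  define a where "a = (\<lambda>i. Re (trace (\<rho> ** kron (pauli i) (mat 1))))"
  define b where "b = (\<lambda>j. Re (trace (\<rho> ** kron (mat 1) (pauli j))))"
  define T where "T = (\<lambda>i j. Re (corr \<rho> i j))"
  have psd: "psd \<rho>" and trace: "trace \<rho> = 1"
    using assms(1) by (simp_all add: density_def)
  have \<rho>_eq: "\<rho> = two_qubit_bloch a b T"
    unfolding a_def b_def T_def by (rule hermitian_eq_two_qubit_bloch[OF psd_hermitian[OF psd] trace])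
  have "\<forall>i\<in>{1,2,3}. \<forall>j\<in>{1,2,3}. i \<noteq> j \<longrightarrow> T i j = 0"
    using assms(2) by (simp add: T_def)
  then obtain z where z_norm: "(\<Sum>k\<in>{1,2,3}. (z k)\<^sup>2) \<le> (\<Sum>k\<in>{1,2,3}. (b k)\<^sup>2)"
    and z_evolution: "bloch_evolution (cos (2 * a1)) (cos (2 * a2)) (cos (2 * a3))
                                     (sin (2 * a1)) (sin (2 * a2)) (sin (2 * a3)) a b T
                    = bloch_evolution (cos (2 * a1)) (cos (2 * a2)) (cos (2 * a3))
                                     (sin (2 * a1)) (sin (2 * a2)) (sin (2 * a3)) a z (\<lambda>i j. a i * z j)"
    using exists_product_bloch_evolution by blast
  have "(\<Sum>k\<in>{1,2,3}. (b k)\<^sup>2) \<le> 1"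
    using psd unfolding \<rho>_eq by (rule psd_two_qubit_bloch_norm_le)
  with z_norm have "density (qubit_bloch z)"
    by (intro density_qubit_bloch) linarith
  moreover have "kron (ptrace_E \<rho>) (qubit_bloch z) = two_qubit_bloch a z (\<lambda>i j. a i * z j)"
    by (simp add: \<rho>_eq ptrace_two_qubit_bloch kron_qubit_bloch)
  ultimately show ?thesis
    using z_evolution by (intro exI[of _ "qubit_bloch z"]) (simp add: \<rho>_eq ptrace_Omega_conj_two_qubit_bloch)
qed

end
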